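(* Let $\mathfrak{H}$ be a Euclidean space and let $(\mathcal{X},\mathsf{S},\gamma,(\Lambda_{a})_{a\in\mathcal{A}})$ be a spectral decomposition system for $\mathfrak{H}$ such that the set $\{\Lambda_a\}_{a\in\mathcal{A}}$ is closed in $\mathscr{L}(\mathcal{X},\mathfrak{H})$. Let $D$ be a nonempty $\mathsf{S}$-invariant subset of $\mathcal{X}$, let $x,y\in\mathcal{X}$, and let $a\in\mathcal{A}$. Then $y\in N_{\mathsf{F}}(x;D)$ if and only if $\Lambda_a y\in N_{\mathsf{F}}(\Lambda_a x;\gamma^{-1}(D))$.
   Context: A Euclidean space is a finite-dimensional real Hilbert space; $\mathscr{L}(\mathcal{X},\mathfrak{H})$ carries the operator-norm topology. A spectral decomposition system for a Euclidean space $\mathfrak{H}$ is a tuple $(\mathcal{X},\mathsf{S},\gamma,(\Lambda_a)_{a\in\mathcal{A}})$ where $\mathcal{X}$ is a Euclidean space, $\mathsf{S}$ is a group acting on $\mathcal{X}$ such that each map $x\mapsto \mathsf{s}\cdot x$ is a linear isometry, $\gamma\colon\mathfrak{H}\to\mathcal{X}$ is a mapping, and each $\Lambda_a\colon\mathcal{X}\to\mathfrak{H}$ is a linear isometry, such that: [A] there exists a mapping $\tau\colon\mathcal{X}\to\mathcal{X}$ with $\tau(\mathsf{s}\cdot x)=\tau(x)$ for all $\mathsf{s},x$, $\tau(x)\in\mathsf{S}\cdot x$ for all $x$, and $\gamma\circ\Lambda_a=\tau$ for all $a\in\mathcal{A}$; [B] for every $X\in\mathfrak{H}$ there exists $a\in\mathcal{A}$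 with $X=\Lambda_a\gamma(X)$; [C] $\langle X,Y\rangle\le\langle\gamma(X),\gamma(Y)\rangle$ for all $X,Y\in\mathfrak{H}$. A set $D\subset\mathcal{X}$ is $\mathsf{S}$-invariant if $\mathsf{s}\cdot x\in D$ for all $x\in D$, $\mathsf{s}\in\mathsf{S}$. For a nonempty subset $C$ of a Euclidean space $\mathcal{H}$, the Fréchet normal cone is $N_{\mathsf{F}}(x;C)=\{y\in\mathcal{H}:\limsup_{z\to x,\,z\in C\setminus\{x\}}\langle z-x,y\rangle/\|z-x\|\le 0\}$ if $x\in C$ and $N_{\mathsf{F}}(x;C)=\varnothing$ if $x\notin C$. *)

theory Defs
  imports "HOL-Analysis.Analysis" "HOL-Algebra.Group_Action"
begin

definition linear_isometry :: "('a::real_normed_vector \<Rightarrow> 'b::real_normed_vector) \<Rightarrow> bool" where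
  "linear_isometry f \<longleftrightarrow> linear f \<and> (\<forall>x. norm (f x) = norm x)"

text \<open>Spectral decomposition system (X, S, gamma, (Lambda_a)_a) for the Euclidean space H.
  The group S is a HOL-Algebra group G acting on X (all of the type 'x) via phi;
  the index set A is the type 'a.\<close>
definition spectral_decomposition_system ::
  "('g, 'm) monoid_scheme \<Rightarrow> ('g \<Rightarrow> 'x::euclidean_space \<Rightarrow> 'x) \<Rightarrow> ('h::euclidean_space \<Rightarrow> 'x)
     \<Rightarrow> ('a \<Rightarrow> 'x \<Rightarrow> 'h) \<Rightarrow> bool" where
  "spectral_decomposition_system G \<phi> \<gamma> \<Lambda> \<longleftrightarrow>
     group G \<and> group_action G UNIV \<phi> \<and>
     (\<forall>s\<in>carrier G. linear_isometry (\<phi> s)) \<and>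
     (\<forall>a. linear_isometry (\<Lambda> a)) \<and>
     (\<exists>\<tau>. (\<forall>s\<in>carrier G. \<forall>x. \<tau> (\<phi> s x) = \<tau> x) \<and>
          (\<forall>x. \<tau> x \<in> orbit G \<phi> x) \<and>
          (\<forall>a. \<gamma> \<circ> \<Lambda> a = \<tau>)) \<and>
     (\<forall>X. \<exists>a. X = \<Lambda> a (\<gamma> X)) \<and>
     (\<forall>X Y. inner X Y \<le> inner (\<gamma> X) (\<gamma> Y))"

definition S_invariant :: "('g, 'm) monoid_scheme \<Rightarrow> ('g \<Rightarrow> 'x \<Rightarrow> 'x) \<Rightarrow> 'x set \<Rightarrow> bool" where
  "S_invariant G \<phi> D \<longleftrightarrow> (\<forall>x\<in>D. \<forall>s\<in>carrier G. \<phi> s x \<in> D)"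

text \<open>Frechet normal cone; the limsup over an empty neighbourhood set is -infinity.\<close>
definition frechet_normal_cone :: "'a::real_inner \<Rightarrow> 'a set \<Rightarrow> 'a set" where
  "frechet_normal_cone x C =
     (if x \<in> C then
        {y. Limsup (at x within (C - {x})) (\<lambda>z. ereal (inner (z - x) y / norm (z - x))) \<le> 0}
      else {})"

end

theory Submission
  imports Defs
begin

(*
  Since \<gamma> \<circ> \<Lambda>\<^sub>a = \<tau> maps into S-orbits, the linear isometry \<Lambda>\<^sub>a maps D into \<gamma>\<^sup>-\<^sup>1(D) and
  x \<in> D iff \<Lambda>\<^sub>a x \<in> \<gamma>\<^sup>-\<^sup>1(D); so a Frechet estimate at \<Lambda>\<^sub>a x pulls back to one at x.
  For the converse, fix e > 0, let Z \<in> \<gamma>\<^sup>-\<^sup>1(D) be at distance \<delta> from \<Lambda>\<^sub>a x and put w = x + (\<delta>/e) y.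
  If \<tau>(w) = s \<cdot> w, then z = s\<^sup>-\<^sup>1 \<cdot> \<gamma>(Z) lies in D, has the norm of Z, and by [C]
  \<langle>Z, \<Lambda>\<^sub>a w\<rangle> \<le> \<langle>\<gamma>(Z), s \<cdot> w\<rangle> = \<langle>z, w\<rangle>. Expanding squared norms turns this into a comparison
  between the increments Z - \<Lambda>\<^sub>a x and z - x: it first forces |z - x| = O(\<delta>), so the
  Frechet estimate at x applies to z, and then yields \<langle>Z - \<Lambda>\<^sub>a x, \<Lambda>\<^sub>a y\<rangle> \<le> e \<delta>.
*)

lemma linear_isometry_diff: "linear_isometry f \<Longrightarrow> f u - f v = f (u - v)"
  unfolding linear_isometry_def by (simp add: linear_diff)

lemma linear_isometry_norm: "linear_isometry f \<Longrightarrow> norm (f u) = norm u"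
  unfolding linear_isometry_def by simp

lemma linear_isometry_inner:
  assumes "linear_isometry f"
  shows "inner (f u) (f v) = inner u v"
proof -
  have "norm (f u - f v) = norm (u - v)"
    using assms by (simp add: linear_isometry_diff linear_isometry_norm)
  then show ?thesis
    using assms by (simp add: dot_norm_neg[of "f u"] dot_norm_neg[of u] linear_isometry_norm)
qed

lemma frechet_normal_cone_iff:
  fixes x y :: "'a::real_inner"
  shows "y \<in> frechet_normal_cone x C \<longleftrightarrow>
    x \<in> C \<and> (\<forall>e>0. \<forall>\<^sub>F z in at x within C. inner (z - x) y \<le> e * norm (z - x))"
proof -
  let ?q = "\<lambda>z. ereal (inner (z - x) y / norm (z - x))"
  let ?F = "at x within C"
  have Limsup_iff: "Limsup ?F ?q \<le> 0 \<longleftrightarrow> (\<forall>e>0. \<forall>\<^sub>F z in ?F. inner (z - x) y / norm (z - x) \<le> e)"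
  proof
    assume "Limsup ?F ?q \<le> 0"
    show "\<forall>e>0. \<forall>\<^sub>F z in ?F. inner (z - x) y / norm (z - x) \<le> e"
    proof (intro allI impI)
      fix e :: real assume "e > 0"
      then have "Limsup ?F ?q < ereal e"
        using \<open>Limsup ?F ?q \<le> 0\<close> by (simp add: le_less_trans[of _ 0])
      then show "\<forall>\<^sub>F z in ?F. inner (z - x) y / norm (z - x) \<le> e"
        by (rule eventually_mono[OF Limsup_lessD]) simp
    qed
  next
    assume "\<forall>e>0. \<forall>\<^sub>F z in ?F. inner (z - x) y / norm (z - x) \<le> e"
    then have "Limsup ?F ?q \<le> 0 + ereal e" if "e > 0" for e
      using that by (intro Limsup_bounded) simp
    then show "Limsup ?F ?q \<le> 0"
      by (rule ereal_le_epsilon2)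
  qed
  have quotient_iff: "(\<forall>\<^sub>F z in ?F. inner (z - x) y / norm (z - x) \<le> e) \<longleftrightarrow>
      (\<forall>\<^sub>F z in ?F. inner (z - x) y \<le> e * norm (z - x))" for e
    by (rule eventually_cong[OF eventually_neq_at_within[of x]])
      (simp add: divide_le_eq mult.commute)
  have punctured: "at x within (C - {x}) = ?F"
    by (simp add: at_within_def)
  show ?thesis
    unfolding frechet_normal_cone_def punctured by (simp add: Limsup_iff quotient_iff)
qed

lemma frechet_normal_cone_pullback:
  assumes L: "linear_isometry L" and "L ` C \<subseteq> E" and "x \<in> C"
    and "L y \<in> frechet_normal_cone (L x) E"
  shows "y \<in> frechet_normal_cone x C"
  unfolding frechet_normal_cone_iff
proof (intro conjI allI impI)
  fix e :: real assume "e > 0"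
  then obtain d where "d > 0" and d: "\<And>Z. Z \<in> E \<Longrightarrow> Z \<noteq> L x \<Longrightarrow> dist Z (L x) < d \<Longrightarrow>
      inner (Z - L x) (L y) \<le> e * norm (Z - L x)"
    using assms(4) unfolding frechet_normal_cone_iff eventually_at by blast
  have near: "inner (z - x) y \<le> e * norm (z - x)" if "z \<in> C" "z \<noteq> x" "dist z x < d" for z
  proof -
    have dist_L: "norm (L z - L x) = norm (z - x)"
      by (simp add: linear_isometry_diff[OF L] linear_isometry_norm[OF L])
    moreover have "L z \<in> E"
      using assms(2) \<open>z \<in> C\<close> by blast
    moreover have "L z \<noteq> L x"
      using dist_L \<open>z \<noteq> x\<close> by auto
    ultimately show ?thesis
      using d[of "L z"] \<open>dist z x < d\<close>
      by (simp add: dist_norm linear_isometry_diff[OF L] linear_isometry_inner[OF L])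
  qed
  show "\<forall>\<^sub>F z in at x within C. inner (z - x) y \<le> e * norm (z - x)"
    unfolding eventually_at using \<open>d > 0\<close> near by blast
qed (use assms in auto)

lemma inner_diff_comparison:
  fixes x y z :: "'a::real_inner" and X Y Z :: "'b::real_inner"
  assumes "norm X = norm x" and "norm Z = norm z" and "inner X Y = inner x y"
    and "inner Z (X + t *\<^sub>R Y) \<le> inner z (x + t *\<^sub>R y)"
  shows "t * inner (Z - X) Y \<le> ((norm (Z - X))\<^sup>2 - (norm (z - x))\<^sup>2) / 2 + t * inner (z - x) y"
proof -
  have "((norm (Z - X))\<^sup>2 - (norm (z - x))\<^sup>2) / 2 = inner z x - inner Z X"
    unfolding dot_norm_neg[of Z X] dot_norm_neg[of z x] assms(1,2) by (simp add: field_simps)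
  then show ?thesis
    using assms(3,4) by (simp add: inner_diff_left inner_add_right algebra_simps)
qed

lemma comparison_radius_bound:
  fixes A B r \<delta> e n :: real
  assumes "e > 0" and "\<delta> > 0" and "r \<ge> 0" and "\<bar>A\<bar> \<le> n * \<delta>" and "\<bar>B\<bar> \<le> n * r"
    and cmp: "\<delta> / e * A \<le> (\<delta>\<^sup>2 - r\<^sup>2) / 2 + \<delta> / e * B"
  shows "r \<le> (2 * n / e + 1) * \<delta>"
proof -
  define t where "t = \<delta> / e"
  have "t * (B - A) \<le> t * (n * r + n * \<delta>)"
    using assms by (intro mult_left_mono) (auto simp: t_def)
  then have "r\<^sup>2 - \<delta>\<^sup>2 - 2 * (n * t * r + n * t * \<delta>) \<le> 0"
    using cmp unfolding t_def[symmetric] by (simp add: field_simps)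
  also have "r\<^sup>2 - \<delta>\<^sup>2 - 2 * (n * t * r + n * t * \<delta>) = (r - (2 * (n * t) + \<delta>)) * (r + \<delta>)"
    by (simp add: algebra_simps power2_eq_square)
  finally have "(r - (2 * (n * t) + \<delta>)) * (r + \<delta>) \<le> 0" .
  then have "r \<le> 2 * (n * t) + \<delta>"
    using assms(2,3) by (simp add: mult_le_0_iff)
  also have "2 * (n * t) + \<delta> = (2 * n / e + 1) * \<delta>"
    using assms(1) by (simp add: t_def field_simps)
  finally show ?thesis .
qed

lemma comparison_slope_bound:
  fixes A B r \<delta> e :: real
  assumes "e > 0" and "\<delta> > 0" and "B \<le> e * r"
    and cmp: "\<delta> / e * A \<le> (\<delta>\<^sup>2 - r\<^sup>2) / 2 + \<delta> / e * B"
  shows "A \<le> e * \<delta>"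
proof -
  have "\<delta> / e * B \<le> \<delta> / e * (e * r)"
    using assms by (intro mult_left_mono) auto
  then have "\<delta> / e * A \<le> \<delta>\<^sup>2 - (\<delta> - r)\<^sup>2 / 2"
    using cmp assms(1) by (simp add: power2_eq_square field_simps)
  also have "\<dots> \<le> \<delta> / e * (e * \<delta>)"
    using assms(1) by (simp add: power2_eq_square)
  finally show ?thesis
    by (rule mult_left_le_imp_le) (use assms in simp)
qed

lemma frechet_estimate_pushforward:
  fixes L :: "'a::real_inner \<Rightarrow> 'b::real_inner"
  assumes L: "linear_isometry L" and "e > 0" and "Z \<noteq> L x"
    and majorant: "\<And>w. \<exists>z\<in>D. norm z = norm Z \<and> inner Z (L w) \<le> inner z w"
    and frechet: "\<And>z. z \<in> D \<Longrightarrow> norm (z - x) < d \<Longrightarrow> inner (z - x) y \<le> e * norm (z - x)"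
    and close: "(2 * norm y / e + 1) * norm (Z - L x) < d"
  shows "inner (Z - L x) (L y) \<le> e * norm (Z - L x)"
proof -
  define \<delta> where "\<delta> = norm (Z - L x)"
  have "\<delta> > 0"
    using \<open>Z \<noteq> L x\<close> by (simp add: \<delta>_def)
  obtain z where "z \<in> D" "norm z = norm Z"
    and "inner Z (L (x + (\<delta> / e) *\<^sub>R y)) \<le> inner z (x + (\<delta> / e) *\<^sub>R y)"
    using majorant by blast
  moreover have "L (x + (\<delta> / e) *\<^sub>R y) = L x + (\<delta> / e) *\<^sub>R L y"
    using L unfolding linear_isometry_def by (simp add: linear_add linear_scale)
  ultimately have cmp: "\<delta> / e * inner (Z - L x) (L y)
      \<le> (\<delta>\<^sup>2 - (norm (z - x))\<^sup>2) / 2 + \<delta> / e * inner (z - x) y"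
    unfolding \<delta>_def
    by (intro inner_diff_comparison) (simp_all add: L linear_isometry_norm linear_isometry_inner)
  have "norm (z - x) \<le> (2 * norm y / e + 1) * \<delta>"
  proof (rule comparison_radius_bound[OF \<open>e > 0\<close> \<open>\<delta> > 0\<close> norm_ge_zero _ _ cmp])
    show "\<bar>inner (Z - L x) (L y)\<bar> \<le> norm y * \<delta>"
      using Cauchy_Schwarz_ineq2[of "Z - L x" "L y"]
      by (simp add: \<delta>_def L linear_isometry_norm mult.commute)
    show "\<bar>inner (z - x) y\<bar> \<le> norm y * norm (z - x)"
      using Cauchy_Schwarz_ineq2[of "z - x" y] by (simp add: mult.commute)
  qed
  then have "inner (z - x) y \<le> e * norm (z - x)"
    using frechet[OF \<open>z \<in> D\<close>] close by (simp add: \<delta>_def)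
  then show ?thesis
    using comparison_slope_bound[OF \<open>e > 0\<close> \<open>\<delta> > 0\<close> _ cmp] by (simp add: \<delta>_def)
qed

lemma frechet_normal_cone_pushforward:
  fixes L :: "'a::real_inner \<Rightarrow> 'b::real_inner"
  assumes L: "linear_isometry L" and "L x \<in> E" and y: "y \<in> frechet_normal_cone x D"
    and majorant: "\<And>Z w. Z \<in> E \<Longrightarrow> \<exists>z\<in>D. norm z = norm Z \<and> inner Z (L w) \<le> inner z w"
  shows "L y \<in> frechet_normal_cone (L x) E"
  unfolding frechet_normal_cone_iff
proof (intro conjI allI impI)
  fix e :: real assume "e > 0"
  then obtain d where "d > 0"
    and d: "\<forall>z\<in>D. z \<noteq> x \<and> dist z x < d \<longrightarrow> inner (z - x) y \<le> e * norm (z - x)"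
    using y unfolding frechet_normal_cone_iff eventually_at by blast
  then have frechet: "inner (z - x) y \<le> e * norm (z - x)" if "z \<in> D" "norm (z - x) < d" for z
    using that by (cases "z = x") (auto simp: dist_norm)
  define K where "K = 2 * norm y / e + 1"
  have "K > 0"
    using \<open>e > 0\<close> by (simp add: K_def add_nonneg_pos)
  show "\<forall>\<^sub>F Z in at (L x) within E. inner (Z - L x) (L y) \<le> e * norm (Z - L x)"
    unfolding eventually_at
  proof (intro exI[of _ "d / K"] conjI ballI impI)
    fix Z assume "Z \<in> E" and Z: "Z \<noteq> L x \<and> dist Z (L x) < d / K"
    then have "K * norm (Z - L x) < d"
      using pos_less_divide_eq[OF \<open>K > 0\<close>] by (simp add: dist_norm mult.commute)
    then show "inner (Z - L x) (L y) \<le> e * norm (Z - L x)"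
      using Z frechet_estimate_pushforward[OF L \<open>e > 0\<close> _ majorant[OF \<open>Z \<in> E\<close>] frechet]
      by (simp add: K_def)
  qed (use \<open>d > 0\<close> \<open>K > 0\<close> in simp)
qed (rule \<open>L x \<in> E\<close>)

lemma S_invariant_action_iff:
  assumes "group_action G UNIV \<phi>" and D: "S_invariant G \<phi> D" and s: "s \<in> carrier G"
  shows "\<phi> s u \<in> D \<longleftrightarrow> u \<in> D"
proof
  interpret group_action G UNIV \<phi>
    by (fact assms(1))
  interpret group G
    using group_hom group_hom.axioms(1) by blast
  assume "\<phi> s u \<in> D"
  then have "\<phi> (inv\<^bsub>G\<^esub> s) (\<phi> s u) \<in> D"
    using D inv_closed[OF s] unfolding S_invariant_def by blast
  then show "u \<in> D"
    using orbit_sym_aux[OF s] by simp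
qed (use D s in \<open>simp add: S_invariant_def\<close>)

lemma spectral_decomposition_system_gamma_Lambda_in_orbit:
  assumes "spectral_decomposition_system G \<phi> \<gamma> \<Lambda>"
  obtains s where "s \<in> carrier G" and "\<gamma> (\<Lambda> a w) = \<phi> s w"
proof -
  from assms obtain \<tau> where "\<forall>x. \<tau> x \<in> orbit G \<phi> x" and "\<forall>b. \<gamma> \<circ> \<Lambda> b = \<tau>"
    unfolding spectral_decomposition_system_def by blast
  then have "\<gamma> (\<Lambda> a w) \<in> orbit G \<phi> w"
    by (metis comp_apply)
  then show thesis
    using that unfolding orbit_def by blast
qed

lemma spectral_decomposition_system_norm_gamma:
  assumes "spectral_decomposition_system G \<phi> \<gamma> \<Lambda>"
  shows "norm (\<gamma> Z) = norm Z"
proof -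
  from assms obtain b where "Z = \<Lambda> b (\<gamma> Z)" and "linear_isometry (\<Lambda> b)"
    unfolding spectral_decomposition_system_def by blast
  then show ?thesis
    by (metis linear_isometry_norm)
qed

lemma spectral_decomposition_system_Lambda_mem_preimage_iff:
  assumes "spectral_decomposition_system G \<phi> \<gamma> \<Lambda>" and "S_invariant G \<phi> D"
  shows "\<Lambda> a w \<in> \<gamma> -` D \<longleftrightarrow> w \<in> D"
proof -
  obtain s where "s \<in> carrier G" and "\<gamma> (\<Lambda> a w) = \<phi> s w"
    using spectral_decomposition_system_gamma_Lambda_in_orbit[OF assms(1)] .
  moreover have "group_action G UNIV \<phi>"
    using assms(1) unfolding spectral_decomposition_system_def by blast
  ultimately show ?thesis
    using S_invariant_action_iff[OF _ assms(2)] by simp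
qed

lemma spectral_decomposition_system_preimage_majorant:
  assumes sds: "spectral_decomposition_system G \<phi> \<gamma> \<Lambda>" and "S_invariant G \<phi> D"
    and "Z \<in> \<gamma> -` D"
  shows "\<exists>z\<in>D. norm z = norm Z \<and> inner Z (\<Lambda> a w) \<le> inner z w"
proof -
  obtain s where s: "s \<in> carrier G" and \<gamma>\<Lambda>: "\<gamma> (\<Lambda> a w) = \<phi> s w"
    using spectral_decomposition_system_gamma_Lambda_in_orbit[OF sds] .
  have "group G" and action: "group_action G UNIV \<phi>"
    and isometries: "\<And>s. s \<in> carrier G \<Longrightarrow> linear_isometry (\<phi> s)"
    and majorization: "\<And>X Y. inner X Y \<le> inner (\<gamma> X) (\<gamma> Y)"
    using sds unfolding spectral_decomposition_system_def by blast+
  define s' where "s' = inv\<^bsub>G\<^esub> s"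
  have "s' \<in> carrier G"
    using group.inv_closed[OF \<open>group G\<close> s] by (simp add: s'_def)
  have "\<phi> s' (\<phi> s w) = w"
    using group_action.orbit_sym_aux[OF action s] by (simp add: s'_def)
  show ?thesis
  proof (intro bexI conjI)
    show "\<phi> s' (\<gamma> Z) \<in> D"
      using S_invariant_action_iff[OF action assms(2) \<open>s' \<in> carrier G\<close>] assms(3) by simp
    show "norm (\<phi> s' (\<gamma> Z)) = norm Z"
      using isometries[OF \<open>s' \<in> carrier G\<close>] by (simp add: linear_isometry_norm spectral_decomposition_system_norm_gamma[OF sds])
    have "inner Z (\<Lambda> a w) \<le> inner (\<gamma> Z) (\<phi> s w)"
      using majorization[of Z "\<Lambda> a w"] by (simp add: \<gamma>\<Lambda>)
    also have "\<dots> = inner (\<phi> s' (\<gamma> Z)) w"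
      using linear_isometry_inner[OF isometries[OF \<open>s' \<in> carrier G\<close>], of "\<gamma> Z" "\<phi> s w"]
      by (simp add: \<open>\<phi> s' (\<phi> s w) = w\<close>)
    finally show "inner Z (\<Lambda> a w) \<le> inner (\<phi> s' (\<gamma> Z)) w" .
  qed
qed

theorem proposition3p2:
  fixes G :: "('g, 'm) monoid_scheme"
    and \<phi> :: "'g \<Rightarrow> 'x::euclidean_space \<Rightarrow> 'x"
    and \<gamma> :: "'h::euclidean_space \<Rightarrow> 'x"
    and \<Lambda> :: "'a \<Rightarrow> 'x \<Rightarrow> 'h"
    and D :: "'x set" and x y :: 'x and a :: 'a
  assumes "spectral_decomposition_system G \<phi> \<gamma> \<Lambda>"
    and "closed (range (\<lambda>b. Blinfun (\<Lambda> b)))"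
    and "D \<noteq> {}"
    and "S_invariant G \<phi> D"
  shows "y \<in> frechet_normal_cone x D \<longleftrightarrow>
         \<Lambda> a y \<in> frechet_normal_cone (\<Lambda> a x) (\<gamma> -` D)"
proof -
  have L: "linear_isometry (\<Lambda> a)"
    using assms(1) unfolding spectral_decomposition_system_def by blast
  have mem: "\<Lambda> a w \<in> \<gamma> -` D \<longleftrightarrow> w \<in> D" for w
    using spectral_decomposition_system_Lambda_mem_preimage_iff[OF assms(1,4)] .
  show ?thesis
  proof
    assume y: "y \<in> frechet_normal_cone x D"
    then have "\<Lambda> a x \<in> \<gamma> -` D"
      using mem frechet_normal_cone_iff by blast
    then show "\<Lambda> a y \<in> frechet_normal_cone (\<Lambda> a x) (\<gamma> -` D)"
      using frechet_normal_cone_pushforward[OF L _ y spectral_decomposition_system_preimage_majorant[OF assms(1,4)]] by blast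
  next
    assume Ly: "\<Lambda> a y \<in> frechet_normal_cone (\<Lambda> a x) (\<gamma> -` D)"
    then have "x \<in> D"
      using mem frechet_normal_cone_iff by blast
    moreover have "\<Lambda> a ` D \<subseteq> \<gamma> -` D"
      using mem by blast
    ultimately show "y \<in> frechet_normal_cone x D"
      using frechet_normal_cone_pullback[OF L _ _ Ly] by blast
  qed
qed

end
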